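(* Let $(\varGamma,C)$ be a split-step SUSYQW whose coin has the form $C(x)=C(\mathrm R)$ for $x\ge1$ and $C(x)=C(\mathrm L)$ for $x\le0$, where $C(\mathrm L),C(\mathrm R)$ are nontrivial. Let $d_\pm=\dim\ker Q_{\epsilon_\pm}$. (1) If $b(\mathrm L)=0$ and $b(\mathrm R)=0$ (Type I), then $d_\pm=1$ if $a(\mathrm L)a(\mathrm R)<0$ and $d_\pm=0$ if $a(\mathrm L)a(\mathrm R)>0$. (2) If $b(\mathrm L)=0$ and $b(\mathrm R)\ne0$ (Type II), then $d_\pm=1$ if $\mp p+a(\mathrm L)a(\mathrm R)<0$ and $d_\pm=0$ if $\mp p+a(\mathrm L)a(\mathrm R)\ge0$. (3) If $b(\mathrm L)\neq0$ and $b(\mathrm R)=0$ (Type II'), then $d_\pm=1$ if $\pm p+a(\mathrm L)a(\mathrm R)<0$ and $d_\pm=0$ if $\pm p+a(\mathrm L)a(\mathrm R)\ge0$. (4) If $b(\mathrm L)\ne0$ and $b(\mathrm R)\ne0$ (Type III), then $d_\pm=1$ if $a(\mathrm R)<\pm p<a(\mathrm L)$ or $a(\mathrm L)<\mp p<a(\mathrm R)$, and $d_\pm=0$ otherwise. (In each case the upper signs give $d_+$ and the lower signs give $d_-$.)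
   Context: Let $L$ be the left shift $(L\Psi)(x)=\Psi(x+1)$ on $\ell^2(\mathbb Z)$. A split-step SUSYQW is $\varGamma=\begin{pmatrix} p & qL\\ \overline{q}L^* & -p\end{pmatrix}$, $C=\begin{pmatrix} a_1 & \overline{b}\\ b & a_2\end{pmatrix}$ on $\ell^2(\mathbb Z)\oplus\ell^2(\mathbb Z)$ with $p\in\mathbb R$, $q\in\mathbb C\setminus\{0\}$, $p^2+|q|^2=1$, $\theta=\operatorname{Arg}q$, real sequences $a_1,a_2$ and complex sequence $b$ on $\mathbb Z$ (as multiplication operators) with $a_j(x)^2+|b(x)|^2=1$, $b(x)(a_1(x)+a_2(x))=0$. Write $C(x)=\begin{pmatrix} a_1(x)&\overline{b(x)}\\ b(x)&a_2(x)\end{pmatrix}$. A $2\times2$ unitary Hermitian matrix is trivial if it equals $\pm I$; for nontrivial $C(\sharp)$ (entries $a_j(\sharp),b(\sharp)$) one has $a_1(\sharp)=-a_2(\sharp)=:a(\sharp)$ and $a(\sharp)^2+|b(\sharp)|^2=1$. $Q_{\epsilon_\pm}$ are the operators on $\ell^2(\mathbb Z)$ defined by $-2iQ_{\epsilon_\pm}=(1\pm p)e^{i\theta}Lb-(1\mp p)e^{-i\theta}\overline{b}L^*\pm|q|(a_2(\cdot+1)-a_1)$ (products are compositions with multiplication operators). *)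

theory Defs
  imports "HOL-Analysis.Analysis" "HOL-Library.Function_Algebras" "HOL-Library.Extended_Nat"
begin

definition cscale :: "complex \<Rightarrow> (int \<Rightarrow> complex) \<Rightarrow> (int \<Rightarrow> complex)" where
  "cscale c f = (\<lambda>x. c * f x)"

definition in_l2 :: "(int \<Rightarrow> complex) \<Rightarrow> bool" where
  "in_l2 \<psi> \<longleftrightarrow> (\<lambda>x. (cmod (\<psi> x))\<^sup>2) summable_on UNIV"

definition ker_l2 :: "((int \<Rightarrow> complex) \<Rightarrow> (int \<Rightarrow> complex)) \<Rightarrow> (int \<Rightarrow> complex) set" where
  "ker_l2 T = {\<psi>. in_l2 \<psi> \<and> T \<psi> = (\<lambda>x. 0)}"

definition cdim :: "(int \<Rightarrow> complex) set \<Rightarrow> enat" where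
  "cdim V = (if \<exists>B. finite B \<and> B \<subseteq> V \<and> module.span cscale B = V
             then enat (vector_space.dim cscale V) else \<infinity>)"

text \<open>The operator Q_eps, with s = 1 for eps_+ and s = -1 for eps_-.
  -2i Q = (1 + s p) e^{i theta} L b - (1 - s p) e^{-i theta} conj(b) L^* + s |q| (a2(.+1) - a1),
  with (L psi)(x) = psi(x+1), (L^* psi)(x) = psi(x-1), theta = Arg q.\<close>
definition Qeps :: "real \<Rightarrow> real \<Rightarrow> complex \<Rightarrow> (int \<Rightarrow> real) \<Rightarrow> (int \<Rightarrow> real) \<Rightarrow> (int \<Rightarrow> complex)
    \<Rightarrow> (int \<Rightarrow> complex) \<Rightarrow> (int \<Rightarrow> complex)" where
  "Qeps s p q a1 a2 b \<psi> = (\<lambda>x. (\<i> / 2) *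
      ( complex_of_real (1 + s * p) * cis (Arg q) * b (x + 1) * \<psi> (x + 1)
      - complex_of_real (1 - s * p) * cis (- Arg q) * cnj (b x) * \<psi> (x - 1)
      + complex_of_real (s * cmod q * (a2 (x + 1) - a1 x)) * \<psi> x))"

definition dQ :: "real \<Rightarrow> real \<Rightarrow> complex \<Rightarrow> (int \<Rightarrow> real) \<Rightarrow> (int \<Rightarrow> real) \<Rightarrow> (int \<Rightarrow> complex) \<Rightarrow> enat" where
  "dQ s p q a1 a2 b = cdim (ker_l2 (Qeps s p q a1 a2 b))"

text \<open>A coin value C(x) (entries a1, a2, b) is trivial iff it equals I or -I.\<close>
definition trivial_coin :: "real \<Rightarrow> real \<Rightarrow> complex \<Rightarrow> bool" where
  "trivial_coin a1 a2 b \<longleftrightarrow> (a1 = 1 \<and> a2 = 1 \<and> b = 0) \<or> (a1 = -1 \<and> a2 = -1 \<and> b = 0)"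

end

theory Submission
  imports Defs
begin

text \<open>On each half-line the coin is constant, so a kernel vector of \<open>Q\<^sub>\<epsilon>\<^sub>s\<close> obeys a
  second-order recurrence with constant coefficients there; after reflecting the left half-line both
  recurrences have the same shape. Their characteristic roots are indexed by \<open>\<sigma> = \<plusminus>1\<close>: the
  \<open>\<sigma>\<close>-root decays on the right iff \<open>\<sigma> s a(R) < s p\<close> and on the left iff \<open>s p < \<sigma> s a(L)\<close>,
  so a square-summable kernel vector is a combination of decaying modes on each side. The junction
  equation at the origin forces the \<open>\<sigma>\<close>-mode on the right to continue as the \<open>\<sigma>\<close>-mode on the
  left, and the two modes can never both decay on both sides. Hence \<open>d\<^sub>s = 1\<close> exactly when
  \<open>s p\<close> lies strictly between \<open>\<sigma> s a(R)\<close> and \<open>\<sigma> s a(L)\<close> for some \<open>\<sigma>\<close>, and \<open>d\<^sub>s = 0\<close>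
  otherwise. A side with \<open>b = 0\<close> fits the same description with root \<open>0\<close>, and the four types
  are the specialisations of this interlacing condition to \<open>a = \<plusminus>1\<close>.\<close>

definition two_sided_geom :: "complex \<Rightarrow> complex \<Rightarrow> int \<Rightarrow> complex" where
  "two_sided_geom l m x = (if 0 \<le> x then l ^ nat x else m ^ nat (- x))"

lemma two_sided_geom_of_nat [simp]: "two_sided_geom l m (int n) = l ^ n"
  by (simp add: two_sided_geom_def)

lemma two_sided_geom_uminus_of_nat [simp]: "two_sided_geom l m (- int n) = m ^ n"
  by (cases "n = 0") (simp_all add: two_sided_geom_def)

lemma two_sided_geom_nonzero: "two_sided_geom l m \<noteq> 0"
proof
  assume "two_sided_geom l m = 0"
  then have "two_sided_geom l m 0 = 0" by simp
  then show False by (simp add: two_sided_geom_def)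
qed

lemma cscale_zero_left [simp]: "cscale 0 f = 0"
  by (simp add: cscale_def fun_eq_iff)

lemma eq_two_sided_geom_combination:
  assumes "\<And>n. \<psi> (int n) = A * l ^ n + B * l' ^ n"
    and "\<And>n. \<psi> (- int n) = A * m ^ n + B * m' ^ n"
  shows "\<psi> = cscale A (two_sided_geom l m) + cscale B (two_sided_geom l' m')"
proof
  fix x :: int
  show "\<psi> x = (cscale A (two_sided_geom l m) + cscale B (two_sided_geom l' m')) x"
  proof (cases "0 \<le> x")
    case True
    then show ?thesis using assms(1)[of "nat x"] by (simp add: cscale_def two_sided_geom_def)
  next
    case False
    then show ?thesis using assms(2)[of "nat (- x)"] by (simp add: cscale_def two_sided_geom_def)
  qed
qed

lemma in_l2_half_lines_tendsto_0:
  assumes "in_l2 \<psi>"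
  shows "(\<lambda>n. \<psi> (int n)) \<longlonglongrightarrow> 0" and "(\<lambda>n. \<psi> (- int n)) \<longlonglongrightarrow> 0"
proof -
  let ?f = "\<lambda>x. (cmod (\<psi> x))\<^sup>2"
  have "(\<lambda>n. \<psi> (h n)) \<longlonglongrightarrow> 0" if "inj h" for h :: "nat \<Rightarrow> int"
  proof -
    have "?f summable_on range h"
      using assms summable_on_subset[of ?f UNIV] by (simp add: in_l2_def)
    then have "(?f \<circ> h) summable_on UNIV" using summable_on_reindex[of h UNIV ?f] that by simp
    then have "summable (?f \<circ> h)" using summable_on_UNIV_nonneg_real_iff[of "?f \<circ> h"] by simp
    then have "(\<lambda>n. sqrt ((?f \<circ> h) n)) \<longlonglongrightarrow> sqrt 0"
      by (intro tendsto_intros summable_LIMSEQ_zero)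
    then show ?thesis by (simp add: tendsto_norm_zero_iff)
  qed
  then show "(\<lambda>n. \<psi> (int n)) \<longlonglongrightarrow> 0" and "(\<lambda>n. \<psi> (- int n)) \<longlonglongrightarrow> 0"
    by (simp_all add: inj_def)
qed

lemma summable_norm_power_square: "cmod l < 1 \<Longrightarrow> summable (\<lambda>n. (cmod (l ^ n))\<^sup>2)"
  using summable_geometric[of "(cmod l)\<^sup>2"]
  by (simp add: abs_square_less_1 norm_power power_mult[symmetric] mult.commute)

lemma in_l2_two_sided_geom:
  assumes "cmod l < 1" and "cmod m < 1"
  shows "in_l2 (two_sided_geom l m)"
proof -
  let ?f = "\<lambda>x. (cmod (two_sided_geom l m x))\<^sup>2"
  have "?f summable_on range int"
    using summable_on_reindex[of int UNIV ?f] summable_on_UNIV_nonneg_real_iff[of "?f \<circ> int"]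
      summable_norm_power_square[OF assms(1)]
    by (simp add: o_def)
  moreover have "?f summable_on range (\<lambda>n. - int (Suc n))"
  proof -
    have "summable (\<lambda>n. (cmod (m ^ Suc n))\<^sup>2)"
      using summable_ignore_initial_segment[OF summable_norm_power_square[OF assms(2)], of 1] by simp
    then show ?thesis
      using summable_on_reindex[of "\<lambda>n. - int (Suc n)" UNIV ?f]
        summable_on_UNIV_nonneg_real_iff[of "?f \<circ> (\<lambda>n. - int (Suc n))"]
      by (simp add: o_def inj_def del: of_nat_Suc)
  qed
  ultimately have "?f summable_on (range int \<union> range (\<lambda>n. - int (Suc n)))"
    by (rule summable_on_Un_disjoint) auto
  moreover have "range int \<union> range (\<lambda>n. - int (Suc n)) = UNIV"
  proof -
    have "x \<in> range int \<or> x \<in> range (\<lambda>n. - int (Suc n))" for x :: int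
      by (cases "0 \<le> x") (auto intro: image_eqI[of x int "nat x"] image_eqI[of x _ "nat (- x - 1)"])
    then show ?thesis by blast
  qed
  ultimately show ?thesis unfolding in_l2_def by simp
qed

interpretation seq: vector_space cscale
  by unfold_locales (auto simp: cscale_def fun_eq_iff algebra_simps)

lemma cdim_zero_space: "cdim {0} = 0"
proof -
  have "cdim {0} = enat (seq.dim {0})"
    unfolding cdim_def by (rule if_P) (intro exI[of _ "{}"], simp)
  also have "seq.dim {0} = 0"
    using seq.dim_span_eq_card_independent[OF seq.independent_empty] by simp
  finally show ?thesis by (simp only: zero_enat_def)
qed

lemma cdim_line:
  assumes "v \<noteq> 0"
  shows "cdim (range (\<lambda>c. cscale c v)) = 1"
proof -
  have span: "seq.span {v} = range (\<lambda>c. cscale c v)" using seq.span_singleton by simp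
  then have "cdim (range (\<lambda>c. cscale c v)) = enat (seq.dim (range (\<lambda>c. cscale c v)))"
    unfolding cdim_def by (intro if_P exI[of _ "{v}"]) (auto simp: seq.span_base)
  also have "seq.dim (range (\<lambda>c. cscale c v)) = 1"
    using seq.dim_span_eq_card_independent[of "{v}"] span assms seq.independent_insert[of v "{}"]
    by simp
  finally show ?thesis by (simp add: one_enat_def)
qed

lemma cscale_mem_ker_l2:
  assumes "\<And>c \<psi>. T (cscale c \<psi>) = cscale c (T \<psi>)" and "\<psi> \<in> ker_l2 T"
  shows "cscale c \<psi> \<in> ker_l2 T"
proof -
  have "in_l2 (cscale c \<psi>)"
    using assms(2) summable_on_cmult_right[of "\<lambda>x. (cmod (\<psi> x))\<^sup>2" UNIV "(cmod c)\<^sup>2"]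
    by (simp add: ker_l2_def in_l2_def cscale_def norm_mult power_mult_distrib)
  then show ?thesis using assms by (simp add: ker_l2_def cscale_def)
qed

lemma cdim_ker_l2_line:
  assumes hom: "\<And>c \<psi>. T (cscale c \<psi>) = cscale c (T \<psi>)"
    and "v \<in> ker_l2 T" and "v \<noteq> 0" and "\<And>\<psi>. \<psi> \<in> ker_l2 T \<Longrightarrow> \<exists>c. \<psi> = cscale c v"
  shows "cdim (ker_l2 T) = 1"
proof -
  have "ker_l2 T = range (\<lambda>c. cscale c v)"
    using assms(4) cscale_mem_ker_l2[OF hom assms(2)] by blast
  then show ?thesis using cdim_line[OF assms(3)] by simp
qed

lemma cdim_ker_l2_trivial:
  assumes hom: "\<And>c \<psi>. T (cscale c \<psi>) = cscale c (T \<psi>)"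
    and "\<And>\<psi>. \<psi> \<in> ker_l2 T \<Longrightarrow> \<psi> = 0"
  shows "cdim (ker_l2 T) = 0"
proof -
  have "0 \<in> ker_l2 T"
    using hom[of 0 0] by (simp add: ker_l2_def in_l2_def zero_fun_def)
  then have "ker_l2 T = {0}" using assms(2) by blast
  then show ?thesis using cdim_zero_space by simp
qed

lemma second_order_recurrence_closed_form:
  fixes u :: "nat \<Rightarrow> 'a::field"
  assumes rec: "\<And>n. c2 * u (n+2) + c1 * u (n+1) + c0 * u n = 0" and "c2 \<noteq> 0"
    and root1: "c2 * l1\<^sup>2 + c1 * l1 + c0 = 0" and root2: "c2 * l2\<^sup>2 + c1 * l2 + c0 = 0"
    and "l1 \<noteq> l2"
  obtains A B where "\<And>n. u n = A * l1 ^ n + B * l2 ^ n"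
proof -
  have "(l1 - l2) * (c2 * (l1 + l2) + c1) = 0" using root1 root2 by algebra
  then have "c2 * (l1 + l2) + c1 = 0" using \<open>l1 \<noteq> l2\<close> by simp
  then have c1: "c1 = - c2 * (l1 + l2)" by algebra
  then have c0: "c0 = c2 * l1 * l2" using root1 by algebra
  have step: "u (n+2) = (l1 + l2) * u (n+1) - l1 * l2 * u n" for n
  proof -
    have "c2 * (u (n+2) - ((l1 + l2) * u (n+1) - l1 * l2 * u n)) = 0"
      using rec[of n] unfolding c1 c0 by (simp add: algebra_simps)
    then show ?thesis using \<open>c2 \<noteq> 0\<close> by simp
  qed
  define A where "A = (u 1 - l2 * u 0) / (l1 - l2)"
  define B where "B = (l1 * u 0 - u 1) / (l1 - l2)"
  have "u n = A * l1 ^ n + B * l2 ^ n \<and> u (n+1) = A * l1 ^ (n+1) + B * l2 ^ (n+1)" for n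
  proof (induction n)
    case 0
    have "l1 - l2 \<noteq> 0" using \<open>l1 \<noteq> l2\<close> by simp
    then show ?case unfolding A_def B_def by (simp add: divide_simps) (simp add: algebra_simps)
  next
    case (Suc n)
    then show ?case using step[of n] by (simp add: algebra_simps)
  qed
  then show ?thesis using that by blast
qed

lemma geometric_combination_tendsto_0_coeff_eq_0:
  fixes A B l1 l2 :: "'a::real_normed_field"
  assumes "(\<lambda>n. A * l1 ^ n + B * l2 ^ n) \<longlonglongrightarrow> 0" and "l1 \<noteq> l2" and "1 \<le> norm l1"
  shows "A = 0"
proof -
  let ?u = "\<lambda>n. A * l1 ^ n + B * l2 ^ n"
  have "(\<lambda>n. ?u (Suc n) - l2 * ?u n) \<longlonglongrightarrow> 0 - l2 * 0"
    by (intro tendsto_intros assms(1) LIMSEQ_Suc)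
  moreover have "?u (Suc n) - l2 * ?u n = A * (l1 - l2) * l1 ^ n" for n
    by (simp add: algebra_simps)
  ultimately have "(\<lambda>n. norm (A * (l1 - l2) * l1 ^ n)) \<longlonglongrightarrow> 0"
    using tendsto_norm_zero by fastforce
  moreover have "norm (A * (l1 - l2)) \<le> norm (A * (l1 - l2) * l1 ^ n)" for n
    using mult_left_mono[OF one_le_power[OF assms(3)], of "norm (A * (l1 - l2))" n]
    by (simp add: norm_mult norm_power)
  ultimately have "norm (A * (l1 - l2)) \<le> 0" by (intro LIMSEQ_le_const[of _ 0]) auto
  then show ?thesis using assms(2) by simp
qed

text \<open>The kernel equation of \<open>Q\<close> on a half-line where the coin is constant with diagonal entry
  \<open>a\<close> and off-diagonal entry \<open>b\<close>; here \<open>\<beta> = e\<^sup>i\<^sup>\<theta> b\<close> and \<open>r = |q|\<close>.\<close>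
locale half_line_coin =
  fixes p r a :: real and \<beta> :: complex
  assumes p_bound: "\<bar>p\<bar> < 1" and r_pos: "0 < r" and r_square: "r\<^sup>2 = (1 + p) * (1 - p)"
    and unitary: "a\<^sup>2 + (cmod \<beta>)\<^sup>2 = 1"
begin

definition solves :: "(nat \<Rightarrow> complex) \<Rightarrow> bool" where
  "solves u \<longleftrightarrow> (\<forall>n. of_real (1 + p) * \<beta> * u (n+2) - of_real (2 * r * a) * u (n+1)
                        - of_real (1 - p) * cnj \<beta> * u n = 0)"

text \<open>For \<open>\<sigma> = \<plusminus>1\<close> these are the roots of the characteristic polynomial of \<open>solves\<close>.
  If \<open>\<beta> = 0\<close> the division yields the junk value \<open>0\<close>; conveniently, the solutions are then
  multiples of \<open>0 ^ n\<close>.\<close>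
definition root :: "real \<Rightarrow> complex" where
  "root \<sigma> = of_real (r * (a + \<sigma>)) / (of_real (1 + p) * \<beta>)"

definition decaying :: "real \<Rightarrow> bool" where
  "decaying \<sigma> \<longleftrightarrow> \<sigma> * a < p"

lemma one_plus_p_pos: "0 < 1 + p"
  using p_bound by linarith

lemma a_eq_pm1_if_degenerate: "\<beta> = 0 \<Longrightarrow> a = 1 \<or> a = -1"
  using unitary by (simp add: power2_eq_1_iff)

lemma abs_a_less_1_if_nondegenerate: "\<beta> \<noteq> 0 \<Longrightarrow> \<bar>a\<bar> < 1"
  using unitary abs_square_less_1[of a] by (smt (verit) zero_less_norm_iff zero_less_power)

lemma root_eq_0_if_degenerate: "\<beta> = 0 \<Longrightarrow> root \<sigma> = 0"
  unfolding root_def by simp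

lemma of_real_one_plus_p_nonzero: "complex_of_real (1 + p) \<noteq> 0"
  using one_plus_p_pos by (metis of_real_eq_0_iff less_irrefl)

lemma scaled_root:
  assumes "\<sigma> = 1 \<or> \<sigma> = -1" and "\<beta> \<noteq> 0 \<or> decaying \<sigma>"
  shows "of_real (1 + p) * \<beta> * root \<sigma> = of_real (r * (a + \<sigma>))"
proof (cases "\<beta> = 0")
  case True
  then have "a + \<sigma> = 0"
    using assms a_eq_pm1_if_degenerate p_bound by (auto simp: decaying_def)
  then show ?thesis using True by simp
next
  case False
  then show ?thesis using of_real_one_plus_p_nonzero unfolding root_def by simp
qed

lemma root_char_eq:
  assumes "\<sigma> = 1 \<or> \<sigma> = -1"
  shows "of_real (1 + p) * \<beta> * (root \<sigma>)\<^sup>2 - of_real (2 * r * a) * root \<sigma> - of_real (1 - p) * cnj \<beta> = 0"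
proof (cases "\<beta> = 0")
  case True
  show ?thesis unfolding root_eq_0_if_degenerate[OF True] by (simp add: True)
next
  case False
  let ?c = "of_real (1 + p) * \<beta>"
  have beta_cnj: "\<beta> * cnj \<beta> = of_real (1 - a\<^sup>2)"
    by (metis add_diff_cancel_left' complex_norm_square unitary)
  have "?c * (?c * (root \<sigma>)\<^sup>2 - of_real (2 * r * a) * root \<sigma> - of_real (1 - p) * cnj \<beta>)
      = (?c * root \<sigma>)\<^sup>2 - of_real (2 * r * a) * (?c * root \<sigma>) - of_real ((1 + p) * (1 - p)) * (\<beta> * cnj \<beta>)"
    by (simp add: algebra_simps power2_eq_square)
  also have "\<dots> = of_real ((r * (a + \<sigma>))\<^sup>2 - 2 * r * a * (r * (a + \<sigma>)) - r\<^sup>2 * (1 - a\<^sup>2))"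
    unfolding scaled_root[OF assms disjI1[OF False]] r_square[symmetric] beta_cnj by simp
  also have "\<dots> = 0" using assms by (auto simp: algebra_simps power2_eq_square)
  finally show ?thesis using False of_real_one_plus_p_nonzero by simp
qed

lemma solves_root_power:
  assumes "\<sigma> = 1 \<or> \<sigma> = -1"
  shows "solves (\<lambda>n. root \<sigma> ^ n)"
  unfolding solves_def
proof
  fix n
  show "of_real (1 + p) * \<beta> * root \<sigma> ^ (n+2) - of_real (2 * r * a) * root \<sigma> ^ (n+1)
      - of_real (1 - p) * cnj \<beta> * root \<sigma> ^ n = 0"
    using arg_cong[OF root_char_eq[OF assms], of "\<lambda>z. root \<sigma> ^ n * z"]
    by (simp add: algebra_simps power2_eq_square)
qed

lemma norm_root_less_1_iff:
  assumes "\<sigma> = 1 \<or> \<sigma> = -1" and "\<beta> \<noteq> 0"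
  shows "cmod (root \<sigma>) < 1 \<longleftrightarrow> decaying \<sigma>"
proof -
  define t where "t = \<sigma> * a"
  have t: "\<bar>t\<bar> < 1" using abs_a_less_1_if_nondegenerate[OF assms(2)] assms(1) by (auto simp: t_def)
  have "\<bar>a + \<sigma>\<bar> = 1 + t" using assms(1) t by (auto simp: t_def)
  then have norm_root: "cmod (root \<sigma>) = r * (1 + t) / ((1 + p) * cmod \<beta>)"
    using one_plus_p_pos r_pos unfolding root_def norm_divide norm_mult norm_of_real by (simp add: abs_mult)
  have beta_sq: "(cmod \<beta>)\<^sup>2 = (1 + t) * (1 - t)"
    using unitary assms(1) by (auto simp: t_def algebra_simps power2_eq_square)
  have pos: "0 < (1 + p) * (1 + t)" using one_plus_p_pos t by simp
  have "cmod (root \<sigma>) < 1 \<longleftrightarrow> r * (1 + t) < (1 + p) * cmod \<beta>"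
    unfolding norm_root using assms(2) one_plus_p_pos by (simp add: divide_less_eq_1_pos)
  also have "\<dots> \<longleftrightarrow> (r * (1 + t))\<^sup>2 < ((1 + p) * cmod \<beta>)\<^sup>2"
    using power_mono_iff[of "(1 + p) * cmod \<beta>" "r * (1 + t)" 2] r_pos one_plus_p_pos t
    by (simp add: not_le[symmetric])
  also have "\<dots> \<longleftrightarrow> ((1 + p) * (1 + t)) * ((1 - p) * (1 + t)) < ((1 + p) * (1 + t)) * ((1 + p) * (1 - t))"
    unfolding power_mult_distrib r_square beta_sq by (simp add: algebra_simps power2_eq_square)
  also have "\<dots> \<longleftrightarrow> (1 - p) * (1 + t) < (1 + p) * (1 - t)"
    using pos by (rule mult_less_cancel_left_pos)
  also have "\<dots> \<longleftrightarrow> t < p"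
    by (simp add: algebra_simps)
  finally show ?thesis by (simp add: decaying_def t_def)
qed

lemma norm_root_less_1:
  assumes "\<sigma> = 1 \<or> \<sigma> = -1" and "decaying \<sigma>"
  shows "cmod (root \<sigma>) < 1"
  using assms norm_root_less_1_iff root_eq_0_if_degenerate by (cases "\<beta> = 0") simp_all

lemma decaying_solution:
  assumes "solves u" and "u \<longlonglongrightarrow> 0"
  obtains A B where "\<And>n. u n = A * root 1 ^ n + B * root (-1) ^ n"
    and "A \<noteq> 0 \<Longrightarrow> decaying 1" and "B \<noteq> 0 \<Longrightarrow> decaying (-1)"
    and "of_real (1 + p) * \<beta> * u 1 = of_real r * (A * of_real (a + 1) + B * of_real (a - 1))"
proof (cases "\<beta> = 0")
  case True
  have "r = 0 \<or> a = 0 \<or> (\<forall>n. u (Suc n) = 0)"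
    using assms(1) unfolding solves_def by (simp add: True)
  then have tail: "u (Suc n) = 0" for n
    using r_pos a_eq_pm1_if_degenerate[OF True] by auto
  have roots: "root 1 = 0" "root (-1) = 0" using root_eq_0_if_degenerate[OF True] by auto
  from a_eq_pm1_if_degenerate[OF True] show ?thesis
  proof
    assume "a = 1"
    show ?thesis
    proof (rule that[of 0 "u 0"])
      show "u n = 0 * root 1 ^ n + u 0 * root (-1) ^ n" for n
        using tail by (cases n) (simp_all add: roots)
    qed (unfold decaying_def, use True \<open>a = 1\<close> p_bound in auto)
  next
    assume "a = -1"
    show ?thesis
    proof (rule that[of "u 0" 0])
      show "u n = u 0 * root 1 ^ n + 0 * root (-1) ^ n" for n
        using tail by (cases n) (simp_all add: roots)
    qed (unfold decaying_def, use True \<open>a = -1\<close> p_bound in auto)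
  qed
next
  case False
  have distinct: "root 1 \<noteq> root (-1)"
    using False of_real_one_plus_p_nonzero r_pos unfolding root_def by (simp add: divide_cancel_right)
  have rec: "of_real (1 + p) * \<beta> * u (n+2) + - of_real (2 * r * a) * u (n+1)
      + - (of_real (1 - p) * cnj \<beta>) * u n = 0" for n
    using assms(1) by (simp add: solves_def)
  have char: "of_real (1 + p) * \<beta> * (root \<sigma>)\<^sup>2 + - of_real (2 * r * a) * root \<sigma>
      + - (of_real (1 - p) * cnj \<beta>) = 0" if "\<sigma> = 1 \<or> \<sigma> = -1" for \<sigma>
    using root_char_eq[OF that] by simp
  have "of_real (1 + p) * \<beta> \<noteq> 0" using False of_real_one_plus_p_nonzero by simp
  then obtain A B where AB: "\<And>n. u n = A * root 1 ^ n + B * root (-1) ^ n"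
    using second_order_recurrence_closed_form[OF rec _ char char distinct] by blast
  have "u = (\<lambda>n. A * root 1 ^ n + B * root (-1) ^ n)" using AB by blast
  with assms(2) have lim: "(\<lambda>n. A * root 1 ^ n + B * root (-1) ^ n) \<longlonglongrightarrow> 0" by simp
  have "A \<noteq> 0 \<Longrightarrow> decaying 1"
    using geometric_combination_tendsto_0_coeff_eq_0[OF lim distinct] norm_root_less_1_iff[of 1] False
    by (meson not_le)
  moreover have "B \<noteq> 0 \<Longrightarrow> decaying (-1)"
  proof -
    have "(\<lambda>n. B * root (-1) ^ n + A * root 1 ^ n) \<longlonglongrightarrow> 0" using lim by (simp add: add.commute)
    then show "B \<noteq> 0 \<Longrightarrow> decaying (-1)"
      using geometric_combination_tendsto_0_coeff_eq_0 distinct norm_root_less_1_iff[of "-1"] False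
      by (metis not_le)
  qed
  moreover have "of_real (1 + p) * \<beta> * u 1 = of_real r * (A * of_real (a + 1) + B * of_real (a - 1))"
  proof -
    have "of_real (1 + p) * \<beta> * u 1
        = A * (of_real (1 + p) * \<beta> * root 1) + B * (of_real (1 + p) * \<beta> * root (-1))"
      using AB[of 1] by (simp add: algebra_simps)
    also have "\<dots> = A * of_real (r * (a + 1)) + B * of_real (r * (a + -1))"
      using scaled_root[of 1] scaled_root[of "-1"] False by simp
    finally show ?thesis by (simp add: algebra_simps)
  qed
  ultimately show ?thesis using that AB by blast
qed

end

lemma nontrivial_coin_diagonal:
  assumes "a1\<^sup>2 + (cmod b)\<^sup>2 = 1" and "a2\<^sup>2 + (cmod b)\<^sup>2 = 1"
    and "b * complex_of_real (a1 + a2) = 0" and "\<not> trivial_coin a1 a2 b"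
  shows "a2 = - a1"
proof (cases "b = 0")
  case True
  then have "a1 = 1 \<or> a1 = -1" "a2 = 1 \<or> a2 = -1" using assms(1,2) by (simp_all add: power2_eq_1_iff)
  then show ?thesis using assms(4) True by (auto simp: trivial_coin_def)
next
  case False
  then have "a1 + a2 = 0" using assms(3) by (simp del: of_real_add add: of_real_eq_0_iff)
  then show ?thesis by linarith
qed

locale two_phase_susyqw =
  fixes p :: real and q :: complex and a1 a2 :: "int \<Rightarrow> real" and b :: "int \<Rightarrow> complex" and s :: real
  assumes q_nz: "q \<noteq> 0"
    and pq: "p\<^sup>2 + (cmod q)\<^sup>2 = 1"
    and coin1: "\<And>x. (a1 x)\<^sup>2 + (cmod (b x))\<^sup>2 = 1"
    and coin2: "\<And>x. (a2 x)\<^sup>2 + (cmod (b x))\<^sup>2 = 1"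
    and coin3: "\<And>x. b x * complex_of_real (a1 x + a2 x) = 0"
    and right: "\<And>x. x \<ge> 1 \<Longrightarrow> a1 x = a1 1 \<and> a2 x = a2 1 \<and> b x = b 1"
    and left: "\<And>x. x \<le> 0 \<Longrightarrow> a1 x = a1 0 \<and> a2 x = a2 0 \<and> b x = b 0"
    and ntL: "\<not> trivial_coin (a1 0) (a2 0) (b 0)"
    and ntR: "\<not> trivial_coin (a1 1) (a2 1) (b 1)"
    and sign: "s = 1 \<or> s = -1"
begin

abbreviation \<beta> :: "int \<Rightarrow> complex" where
  "\<beta> x \<equiv> cis (Arg q) * b x"

lemma a2_eq_neg_a1: "a2 x = - a1 x"
proof (cases "1 \<le> x")
  case True
  then show ?thesis using right[OF True] nontrivial_coin_diagonal[OF coin1 coin2 coin3 ntR] by simp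
next
  case False
  then show ?thesis using left[of x] nontrivial_coin_diagonal[OF coin1 coin2 coin3 ntL] by simp
qed

lemma p_bound: "\<bar>p\<bar> < 1"
proof -
  have "p\<^sup>2 < 1" using pq q_nz by (smt (verit) zero_less_norm_iff zero_less_power)
  then show ?thesis by (simp add: abs_square_less_1)
qed

lemma cmod_q_square: "(cmod q)\<^sup>2 = (1 + s * p) * (1 - s * p)"
  using pq sign by (auto simp: algebra_simps power2_eq_square)

sublocale right: half_line_coin "s * p" "cmod q" "s * a1 1" "\<beta> 1"
  using p_bound sign q_nz cmod_q_square coin1[of 1] by unfold_locales (auto simp: abs_mult norm_mult)

text \<open>Reflecting \<open>x \<mapsto> -x\<close> turns the kernel equation on the left half-line into the
  right-hand form with \<open>(s p, s a, \<beta>)\<close> replaced by \<open>(-s p, -s a, cnj \<beta>)\<close>.\<close>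
sublocale left: half_line_coin "- s * p" "cmod q" "- s * a1 0" "cnj (\<beta> 0)"
  using p_bound sign q_nz cmod_q_square coin1[of 0] by unfold_locales (auto simp: abs_mult norm_mult algebra_simps)

lemma Qeps_apply:
  "Qeps s p q a1 a2 b \<psi> x = (\<i> / 2) *
     (of_real (1 + s * p) * \<beta> (x+1) * \<psi> (x+1) - of_real (1 - s * p) * cnj (\<beta> x) * \<psi> (x-1)
      - of_real (s * cmod q * (a1 (x+1) + a1 x)) * \<psi> x)"
  unfolding Qeps_def a2_eq_neg_a1[of "x+1"] by (simp add: cis_cnj algebra_simps)

lemma mem_ker_iff:
  "\<psi> \<in> ker_l2 (Qeps s p q a1 a2 b) \<longleftrightarrow>
     in_l2 \<psi> \<and> right.solves (\<lambda>n. \<psi> (int n)) \<and> left.solves (\<lambda>n. \<psi> (- int n)) \<and>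
     of_real (1 + s * p) * \<beta> 1 * \<psi> 1 - of_real (1 - s * p) * cnj (\<beta> 0) * \<psi> (-1)
       - of_real (s * cmod q * (a1 1 + a1 0)) * \<psi> 0 = 0"
proof -
  define site where "site x = of_real (1 + s * p) * \<beta> (x+1) * \<psi> (x+1)
    - of_real (1 - s * p) * cnj (\<beta> x) * \<psi> (x-1) - of_real (s * cmod q * (a1 (x+1) + a1 x)) * \<psi> x"
    for x
  have "x = int (nat (x - 1)) + 1 \<or> x = 0 \<or> x = - int (nat (- x - 1)) - 1" for x :: int
    by linarith
  then have sites: "(\<forall>x. site x = 0) \<longleftrightarrow>
      (\<forall>n. site (int n + 1) = 0) \<and> site 0 = 0 \<and> (\<forall>n. site (- int n - 1) = 0)"
    by (metis add.inverse_inverse add.inverse_neutral diff_minus_eq_add)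
  have "site (int n + 1) = of_real (1 + s * p) * \<beta> 1 * \<psi> (int (n+2))
      - of_real (2 * cmod q * (s * a1 1)) * \<psi> (int (n+1)) - of_real (1 - s * p) * cnj (\<beta> 1) * \<psi> (int n)"
    for n
    using right[of "int n + 1"] right[of "int n + 2"] unfolding site_def
    by (simp add: algebra_simps)
  moreover have "site (- int n - 1) = - (of_real (1 + - s * p) * cnj (\<beta> 0) * \<psi> (- int (n+2))
      - of_real (2 * cmod q * (- s * a1 0)) * \<psi> (- int (n+1))
      - of_real (1 - - s * p) * cnj (cnj (\<beta> 0)) * \<psi> (- int n))"
    for n
    using left[of "- int n"] left[of "- int n - 1"] unfolding site_def
    by (simp add: algebra_simps) (metis add.commute diff_conv_add_uminus)
  ultimately have "(\<forall>x. site x = 0) \<longleftrightarrow> right.solves (\<lambda>n. \<psi> (int n)) \<and> left.solves (\<lambda>n. \<psi> (- int n))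
      \<and> site 0 = 0"
    unfolding sites right.solves_def left.solves_def by (simp only: neg_equal_0_iff_equal) blast
  moreover have "Qeps s p q a1 a2 b \<psi> = (\<lambda>x. 0) \<longleftrightarrow> (\<forall>x. site x = 0)"
    unfolding fun_eq_iff Qeps_apply site_def by simp
  ultimately show ?thesis unfolding ker_l2_def site_def by auto
qed

definition decaying :: "real \<Rightarrow> bool" where
  "decaying \<sigma> \<longleftrightarrow> right.decaying \<sigma> \<and> left.decaying \<sigma>"

definition mode :: "real \<Rightarrow> int \<Rightarrow> complex" where
  "mode \<sigma> = two_sided_geom (right.root \<sigma>) (left.root \<sigma>)"

lemma mode_mem_ker:
  assumes "\<sigma> = 1 \<or> \<sigma> = -1" and "decaying \<sigma>"
  shows "mode \<sigma> \<in> ker_l2 (Qeps s p q a1 a2 b)"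
proof -
  have R: "right.decaying \<sigma>" and L: "left.decaying \<sigma>" using assms(2) by (simp_all add: decaying_def)
  have "in_l2 (mode \<sigma>)"
    unfolding mode_def using right.norm_root_less_1[OF assms(1) R] left.norm_root_less_1[OF assms(1) L]
    by (rule in_l2_two_sided_geom)
  moreover have "right.solves (\<lambda>n. mode \<sigma> (int n))" and "left.solves (\<lambda>n. mode \<sigma> (- int n))"
    using right.solves_root_power[OF assms(1)] left.solves_root_power[OF assms(1)] by (simp_all add: mode_def)
  moreover have "mode \<sigma> 1 = right.root \<sigma>" "mode \<sigma> (-1) = left.root \<sigma>" "mode \<sigma> 0 = 1"
    using two_sided_geom_of_nat[of _ _ 1] two_sided_geom_uminus_of_nat[of _ _ 1]
      two_sided_geom_of_nat[of _ _ 0]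
    by (simp_all add: mode_def)
  moreover have "of_real (1 + s * p) * \<beta> 1 * right.root \<sigma> - of_real (1 - s * p) * cnj (\<beta> 0) * left.root \<sigma>
      - of_real (s * cmod q * (a1 1 + a1 0)) = 0"
    using right.scaled_root[OF assms(1) disjI2[OF R]] left.scaled_root[OF assms(1) disjI2[OF L]]
    by (simp add: algebra_simps)
  ultimately show ?thesis unfolding mem_ker_iff by simp
qed

lemma ker_decomposition:
  assumes "\<psi> \<in> ker_l2 (Qeps s p q a1 a2 b)"
  obtains A B where "\<psi> = cscale A (mode 1) + cscale B (mode (-1))"
    and "A \<noteq> 0 \<Longrightarrow> decaying 1" and "B \<noteq> 0 \<Longrightarrow> decaying (-1)"
proof -
  have l2: "in_l2 \<psi>" and R: "right.solves (\<lambda>n. \<psi> (int n))" and L: "left.solves (\<lambda>n. \<psi> (- int n))"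
    and junction: "of_real (1 + s * p) * \<beta> 1 * \<psi> 1 - of_real (1 - s * p) * cnj (\<beta> 0) * \<psi> (-1)
       - of_real (s * cmod q * (a1 1 + a1 0)) * \<psi> 0 = 0"
    using assms unfolding mem_ker_iff by auto
  obtain A B where AB: "\<And>n. \<psi> (int n) = A * right.root 1 ^ n + B * right.root (-1) ^ n"
    and A: "A \<noteq> 0 \<Longrightarrow> right.decaying 1" and B: "B \<noteq> 0 \<Longrightarrow> right.decaying (-1)"
    and flux_R: "of_real (1 + s * p) * \<beta> 1 * \<psi> 1
      = of_real (cmod q) * (A * of_real (s * a1 1 + 1) + B * of_real (s * a1 1 - 1))"
    using right.decaying_solution[OF R in_l2_half_lines_tendsto_0(1)[OF l2]] by auto
  obtain C D where CD: "\<And>n. \<psi> (- int n) = C * left.root 1 ^ n + D * left.root (-1) ^ n"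
    and C: "C \<noteq> 0 \<Longrightarrow> left.decaying 1" and D: "D \<noteq> 0 \<Longrightarrow> left.decaying (-1)"
    and flux_L: "of_real (1 - s * p) * cnj (\<beta> 0) * \<psi> (-1)
      = of_real (cmod q) * (C * of_real (- s * a1 0 + 1) + D * of_real (- s * a1 0 - 1))"
    using left.decaying_solution[OF L in_l2_half_lines_tendsto_0(2)[OF l2]] by auto
  have "\<psi> 0 = A + B" "\<psi> 0 = C + D" using AB[of 0] CD[of 0] by simp_all
  then have "of_real (cmod q) * (2 * (A - C)) = 0"
    using junction flux_R flux_L
    by (simp only: of_real_mult of_real_add of_real_diff of_real_minus of_real_1) algebra
  then have "C = A" using q_nz by simp
  with \<open>\<psi> 0 = A + B\<close> \<open>\<psi> 0 = C + D\<close> have "D = B" by simp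
  have "\<psi> = cscale A (mode 1) + cscale B (mode (-1))"
    unfolding mode_def by (rule eq_two_sided_geom_combination[OF AB CD[unfolded \<open>C = A\<close> \<open>D = B\<close>]])
  moreover have "A \<noteq> 0 \<Longrightarrow> decaying 1" using A C \<open>C = A\<close> by (simp add: decaying_def)
  moreover have "B \<noteq> 0 \<Longrightarrow> decaying (-1)" using B D \<open>D = B\<close> by (simp add: decaying_def)
  ultimately show ?thesis using that by blast
qed

lemma mem_ker_multiple_of_mode:
  assumes "\<sigma> = 1 \<or> \<sigma> = -1" and "\<not> decaying (- \<sigma>)" and "\<psi> \<in> ker_l2 (Qeps s p q a1 a2 b)"
  shows "\<exists>c. \<psi> = cscale c (mode \<sigma>)"
proof -
  obtain A B where \<psi>: "\<psi> = cscale A (mode 1) + cscale B (mode (-1))"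
    and "A \<noteq> 0 \<Longrightarrow> decaying 1" and "B \<noteq> 0 \<Longrightarrow> decaying (-1)"
    using ker_decomposition[OF assms(3)] by blast
  from assms(1) show ?thesis
  proof
    assume "\<sigma> = 1"
    then have "B = 0" using assms(2) \<open>B \<noteq> 0 \<Longrightarrow> decaying (-1)\<close> by auto
    then show ?thesis using \<psi> \<open>\<sigma> = 1\<close> by auto
  next
    assume "\<sigma> = -1"
    then have "A = 0" using assms(2) \<open>A \<noteq> 0 \<Longrightarrow> decaying 1\<close> by auto
    then show ?thesis using \<psi> \<open>\<sigma> = -1\<close> by auto
  qed
qed

lemma dQ_eq_if_decaying: "dQ s p q a1 a2 b = (if decaying 1 \<or> decaying (-1) then 1 else 0)"
proof -
  have exclusive: "\<not> (decaying 1 \<and> decaying (-1))"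
    unfolding decaying_def right.decaying_def left.decaying_def by linarith
  have hom: "Qeps s p q a1 a2 b (cscale c \<psi>) = cscale c (Qeps s p q a1 a2 b \<psi>)" for c \<psi>
    by (simp add: Qeps_def cscale_def fun_eq_iff algebra_simps)
  consider (plus) "decaying 1" | (minus) "decaying (-1)" | (none) "\<not> decaying 1" "\<not> decaying (-1)"
    by blast
  then show ?thesis
  proof cases
    case plus
    then have "cdim (ker_l2 (Qeps s p q a1 a2 b)) = 1"
      using exclusive mem_ker_multiple_of_mode[of 1]
      by (intro cdim_ker_l2_line[OF hom mode_mem_ker]) (simp_all add: mode_def two_sided_geom_nonzero)
    then show ?thesis using plus by (simp add: dQ_def)
  next
    case minus
    then have "cdim (ker_l2 (Qeps s p q a1 a2 b)) = 1"
      using exclusive mem_ker_multiple_of_mode[of "-1"]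
      by (intro cdim_ker_l2_line[OF hom mode_mem_ker]) (simp_all add: mode_def two_sided_geom_nonzero)
    then show ?thesis using minus by (simp add: dQ_def)
  next
    case none
    have "cdim (ker_l2 (Qeps s p q a1 a2 b)) = 0"
    proof (rule cdim_ker_l2_trivial[OF hom])
      fix \<psi> assume "\<psi> \<in> ker_l2 (Qeps s p q a1 a2 b)"
      then obtain A B where "\<psi> = cscale A (mode 1) + cscale B (mode (-1))"
        and "A \<noteq> 0 \<Longrightarrow> decaying 1" and "B \<noteq> 0 \<Longrightarrow> decaying (-1)"
        using ker_decomposition by blast
      with none show "\<psi> = 0" by (cases "A = 0"; cases "B = 0") auto
    qed
    then show ?thesis using none by (simp add: dQ_def)
  qed
qed

lemma dQ_eq:
  "dQ s p q a1 a2 b = (if (a1 1 < s * p \<and> s * p < a1 0) \<or> (a1 0 < - s * p \<and> - s * p < a1 1) then 1 else 0)"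
  unfolding dQ_eq_if_decaying decaying_def right.decaying_def left.decaying_def using sign by auto

lemma a1_eq_pm1_if_b_eq_0: "b x = 0 \<Longrightarrow> a1 x = 1 \<or> a1 x = -1"
  using coin1[of x] by (simp add: power2_eq_1_iff)

end

theorem theorem4p2:
  fixes p :: real and q :: complex and a1 a2 :: "int \<Rightarrow> real" and b :: "int \<Rightarrow> complex"
  assumes q_nz: "q \<noteq> 0"
    and pq: "p\<^sup>2 + (cmod q)\<^sup>2 = 1"
    and coin1: "\<And>x. (a1 x)\<^sup>2 + (cmod (b x))\<^sup>2 = 1"
    and coin2: "\<And>x. (a2 x)\<^sup>2 + (cmod (b x))\<^sup>2 = 1"
    and coin3: "\<And>x. b x * complex_of_real (a1 x + a2 x) = 0"
    and right: "\<And>x. x \<ge> 1 \<Longrightarrow> a1 x = a1 1 \<and> a2 x = a2 1 \<and> b x = b 1"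
    and left: "\<And>x. x \<le> 0 \<Longrightarrow> a1 x = a1 0 \<and> a2 x = a2 0 \<and> b x = b 0"
    and ntL: "\<not> trivial_coin (a1 0) (a2 0) (b 0)"
    and ntR: "\<not> trivial_coin (a1 1) (a2 1) (b 1)"
  shows "\<forall>s \<in> {1, -1::real}.
     (b 0 = 0 \<and> b 1 = 0 \<longrightarrow>
        (a1 0 * a1 1 < 0 \<longrightarrow> dQ s p q a1 a2 b = 1) \<and>
        (a1 0 * a1 1 > 0 \<longrightarrow> dQ s p q a1 a2 b = 0)) \<and>
     (b 0 = 0 \<and> b 1 \<noteq> 0 \<longrightarrow>
        (- s * p + a1 0 * a1 1 < 0 \<longrightarrow> dQ s p q a1 a2 b = 1) \<and>
        (- s * p + a1 0 * a1 1 \<ge> 0 \<longrightarrow> dQ s p q a1 a2 b = 0)) \<and>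
     (b 0 \<noteq> 0 \<and> b 1 = 0 \<longrightarrow>
        (s * p + a1 0 * a1 1 < 0 \<longrightarrow> dQ s p q a1 a2 b = 1) \<and>
        (s * p + a1 0 * a1 1 \<ge> 0 \<longrightarrow> dQ s p q a1 a2 b = 0)) \<and>
     (b 0 \<noteq> 0 \<and> b 1 \<noteq> 0 \<longrightarrow>
        ((a1 1 < s * p \<and> s * p < a1 0) \<or> (a1 0 < - s * p \<and> - s * p < a1 1) \<longrightarrow> dQ s p q a1 a2 b = 1) \<and>
        (\<not> ((a1 1 < s * p \<and> s * p < a1 0) \<or> (a1 0 < - s * p \<and> - s * p < a1 1)) \<longrightarrow> dQ s p q a1 a2 b = 0))"
proof (intro ballI, goal_cases)
  case (1 s)
  interpret two_phase_susyqw p q a1 a2 b s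
    by (intro two_phase_susyqw.intro assms) (use 1 in auto)
  show ?case
    using right.p_bound a1_eq_pm1_if_b_eq_0[of 0] a1_eq_pm1_if_b_eq_0[of 1] unfolding dQ_eq
    by (auto simp: abs_less_iff)
qed

end
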